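(* Let $p\ge1$ and $N\ge1$, and assume $\beta_1^2>2(\beta_0-\lambda_1)$. Set $\mu_{as}:=\frac p2\beta_1^2+p(\lambda_1-\beta_0)$. Then there exists $\tau_0>0$ such that, for every fixed $\tau\in(0,\tau_0)$, there is a finite random variable $\xi$ with \[ \|Y_n\|^p\le\xi\,e^{-\frac{\mu_{as}}{4}t_n}\qquad\text{for all }n\in\mathbb N,\ \text{a.s.} \] Here the scheme is: $t_n=n\tau$, $\Delta W_n=W(t_{n+1})-W(t_n)$, and $Y_n=(Y_n^1,\dots,Y_n^N)^\top\in\mathbb R^N$ is defined, for $k=1,\dots,N$ and assuming $1+\tau(\lambda_k-\beta_0)\neq0$, by \[ Y_{n+1}^k=\frac{Y_n^k(1+\beta_1\Delta W_n)}{1+\tau(\lambda_k-\beta_0)},\qquad Y_0^k=y_0^k. \] In matrix form this is $Y_{n+1}=(I_N+\tau(\Lambda_N-\beta_0I_N))^{-1}(Y_n+\beta_1Y_n\Delta W_n)$ with $\Lambda_N=\operatorname{diag}(\lambda_1,\dots,\lambda_N)$. The norm is $\|Y_n\|^p=\big(\sum_{k=1}^N|Y_n^k|^2\big)^{p/2}$.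
   Context: $W$ is a one-dimensional standard Brownian motion on a complete filtered probability space $(\Omega,\mathcal F,\{\mathcal F_t\},\mathbb P)$, with the natural augmented filtration. $H$ is a Hilbert space. $A$ is a linear, self-adjoint, positive-definite operator on $H$ with compact resolvent. Its eigenpairs $(\lambda_k,\phi_k)$ satisfy $0<\lambda_1\le\lambda_2\le\cdots\to\infty$, and $\{\phi_k\}$ is an orthonormal basis. $\beta_0,\beta_1\in\mathbb R$. The initial datum $y_0\in L^p_{\mathcal F_0}(\Omega;H)$ is an $\mathcal F_0$-measurable $H$-valued random variable with finite $p$-th moment, and $y_0^k=\langle y_0,\phi_k\rangle_H$. The scheme is the implicit Euler–Maruyama discretization of the $N$-mode spectral Galerkin truncation $dY_N=-(\Lambda_N-\beta_0I_N)Y_N\,dt+\beta_1Y_N\,dW$ of $dy+Ay\,dt=\beta_0y\,dt+\beta_1y\,dW$. *)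

theory Defs
  imports "HOL-Probability.Probability"
begin

definition is_filtration :: "'a measure \<Rightarrow> (real \<Rightarrow> 'a measure) \<Rightarrow> bool" where
  "is_filtration M F \<longleftrightarrow>
     (\<forall>t. subalgebra M (F t)) \<and> (\<forall>s t. s \<le> t \<longrightarrow> sets (F s) \<subseteq> sets (F t))"

definition is_brownian_motion ::
  "'a measure \<Rightarrow> (real \<Rightarrow> 'a measure) \<Rightarrow> (real \<Rightarrow> 'a \<Rightarrow> real) \<Rightarrow> bool" where
  "is_brownian_motion M F W \<longleftrightarrow>
     is_filtration M F \<and>
     (\<forall>t\<ge>0. W t \<in> borel_measurable (F t)) \<and>
     (AE \<omega> in M. W 0 \<omega> = 0) \<and>
     (AE \<omega> in M. continuous_on {0..} (\<lambda>t. W t \<omega>)) \<and>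
     (\<forall>s t. 0 \<le> s \<and> s < t \<longrightarrow>
        prob_space.indep_set M (sets (F s))
          (sets (vimage_algebra (space M) (\<lambda>\<omega>. W t \<omega> - W s \<omega>) borel)) \<and>
        distributed M lborel (\<lambda>\<omega>. W t \<omega> - W s \<omega>) (normal_density 0 (sqrt (t - s))))"

definition self_adjoint_op :: "'h::{real_inner,complete_space} set \<Rightarrow> ('h \<Rightarrow> 'h) \<Rightarrow> bool" where
  "self_adjoint_op D A \<longleftrightarrow>
     subspace D \<and> closure D = UNIV \<and>
     (\<forall>x\<in>D. \<forall>y\<in>D. \<forall>a b. A (a *\<^sub>R x + b *\<^sub>R y) = a *\<^sub>R A x + b *\<^sub>R A y) \<and>
     (\<forall>x\<in>D. \<forall>y\<in>D. inner (A x) y = inner x (A y)) \<and>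
     (\<forall>y z. (\<forall>x\<in>D. inner (A x) y = inner x z) \<longrightarrow> y \<in> D \<and> A y = z)"

text \<open>Modes are indexed 0-based: mode k (k < N) corresponds to the paper's mode k+1.
  Y n \<omega> k is the k-th component of Y_n at \<omega>.\<close>
primrec em_scheme ::
  "(nat \<Rightarrow> real) \<Rightarrow> real \<Rightarrow> real \<Rightarrow> real \<Rightarrow> (real \<Rightarrow> 'a \<Rightarrow> real) \<Rightarrow> ('a \<Rightarrow> nat \<Rightarrow> real)
     \<Rightarrow> nat \<Rightarrow> 'a \<Rightarrow> nat \<Rightarrow> real" where
  "em_scheme lam \<beta>0 \<beta>1 \<tau> W Y0 0 \<omega> k = Y0 \<omega> k"
| "em_scheme lam \<beta>0 \<beta>1 \<tau> W Y0 (Suc n) \<omega> k =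
     em_scheme lam \<beta>0 \<beta>1 \<tau> W Y0 n \<omega> k
       * (1 + \<beta>1 * (W (real (Suc n) * \<tau>) \<omega> - W (real n * \<tau>) \<omega>))
       / (1 + \<tau> * (lam k - \<beta>0))"

end

theory Submission
  imports Defs
begin

(* Mode k of the scheme equals y0^k times the product of the factors 1 + beta1 dW_j, divided by
   (1 + tau (lambda_k - beta0))^n, so everything hinges on the growth of that random product.
   For a small exponent q > 0 the bound |1 + x|^q <= 1 + q x - q (1 - 2q)/2 x^2 + K x^4 and the
   Gaussian moments of dW ~ N(0, tau) give E |1 + beta1 dW|^q <= 1 - q (1 - 2q) beta1^2 tau / 2
   + O(tau^2). Because lambda_1 - beta0 + beta1^2/2 > 0, this is below rho^q for all small tau,
   where rho = (1 + tau (lambda_1 - beta0)) exp (- mu_as tau / (4 p)): both sides equal 1 at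
   tau = 0 and rho^q has the larger derivative there. By independence of the increments the q-th
   moment of the product after n steps is at most the n-th power of that bound, so Markov's
   inequality and Borel-Cantelli give product <= C rho^n almost surely; dividing by
   (1 + tau (lambda_k - beta0))^n >= (1 + tau (lambda_1 - beta0))^n yields the rate
   exp (- mu_as t_n / 4). *)

section \<open>Elementary inequalities\<close>

lemma one_plus_powr_le_one_plus_mult:
  fixes q x :: real
  assumes "0 \<le> q" "q \<le> 1" "-1 \<le> x"
  shows "(1 + x) powr q \<le> 1 + q * x"
proof (cases "x = -1")
  case False
  then have "(1 + x) powr q * 1 powr (1 - q) \<le> q * (1 + x) + (1 - q) * 1"
    using assms by (intro Youngs_inequality_0) auto
  then show ?thesis by (simp add: algebra_simps)
qed (use assms in simp)

lemma nonneg_if_second_derivative_nonneg: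
  fixes f f' f'' :: "real \<Rightarrow> real"
  assumes I: "is_interval I" "0 \<in> I" "x \<in> I"
    and f': "\<And>y. y \<in> I \<Longrightarrow> (f has_real_derivative f' y) (at y)"
    and f'': "\<And>y. y \<in> I \<Longrightarrow> (f' has_real_derivative f'' y) (at y)"
    and convex: "\<And>y. y \<in> I \<Longrightarrow> 0 \<le> f'' y"
    and tangent: "f 0 = 0" "f' 0 = 0"
  shows "0 \<le> f x"
proof -
  have between: "y \<in> I" if "min x 0 \<le> y" "y \<le> max x 0" for y
    using I that unfolding is_interval_1 by (metis max_def min_def)
  consider "x \<le> 0" | "0 \<le> x" by linarith
  then show ?thesis
  proof cases
    case 1
    have "f' y \<le> f' 0" if "x \<le> y" "y \<le> 0" for y
      using that by (intro deriv_nonneg_imp_mono[OF f'' convex]) (simp_all add: between)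
    then have "f 0 \<le> f x"
      using 1 by (intro deriv_nonpos_imp_antimono[OF f']) (simp_all add: between tangent)
    then show ?thesis using tangent by simp
  next
    case 2
    have "f' 0 \<le> f' y" if "0 \<le> y" "y \<le> x" for y
      using that by (intro deriv_nonneg_imp_mono[OF f'' convex]) (simp_all add: between)
    then have "f 0 \<le> f x"
      using 2 by (intro deriv_nonneg_imp_mono[OF f']) (simp_all add: between tangent)
    then show ?thesis using tangent by simp
  qed
qed

lemma one_plus_powr_second_derivative_bound:
  fixes q y :: real
  assumes q: "0 < q" "q \<le> 1/4" and y: "-1 < y" "y \<le> q/3"
  shows "1 - 2*q \<le> (1 - q) * (1 + y) powr (q - 2)"
proof (cases "y \<le> 0")
  case True
  have "(1 + y) powr 0 \<le> (1 + y) powr (q - 2)"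
    by (rule powr_mono') (use True y q in auto)
  then have "1 \<le> (1 + y) powr (q - 2)"
    using y by simp
  then have "1 - q \<le> (1 - q) * (1 + y) powr (q - 2)"
    using q by (simp add: mult_le_cancel_left1)
  then show ?thesis
    using q by linarith
next
  case False
  have "(1 + y)^2 \<le> 1 + q"
  proof -
    have "y * y \<le> (q/3) * 1" using False y q by (intro mult_mono) auto
    then show ?thesis using y by (simp add: power2_eq_square algebra_simps)
  qed
  then have "1 / (1 + q) \<le> 1 / (1 + y)^2"
    using False q by (intro divide_left_mono) auto
  also have "\<dots> = (1 + y) powr (-2)"
    using y by (simp add: powr_minus_divide powr_realpow)
  also have "\<dots> \<le> (1 + y) powr (q - 2)"
    using False q by (intro powr_mono) auto
  finally have "(1 - q) * (1 / (1 + q)) \<le> (1 - q) * (1 + y) powr (q - 2)"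
    using q by (intro mult_left_mono) auto
  moreover have "1 - 2*q \<le> (1 - q) * (1 / (1 + q))"
    using q by (simp add: field_simps)
  ultimately show ?thesis by linarith
qed

lemma one_plus_powr_le_quadratic:
  fixes q x :: real
  assumes q: "0 < q" "q \<le> 1/4" and x: "-1 < x" "x \<le> q/3"
  shows "(1 + x) powr q \<le> 1 + q*x - q*(1 - 2*q)/2 * x^2"
proof -
  define c where "c = q*(1 - 2*q)"
  define f where "f y = 1 + q*y - c/2 * y^2 - (1 + y) powr q" for y
  define f' where "f' y = q - c*y - q * (1 + y) powr (q - 1)" for y
  define f'' where "f'' y = - c - q * ((q - 1) * (1 + y) powr (q - 2))" for y
  have df: "(f has_real_derivative f' y) (at y)" if "y \<in> {-1<..q/3}" for y
    using that unfolding f_def f'_def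
    by (auto intro!: derivative_eq_intros simp: power2_eq_square algebra_simps)
  moreover have df': "(f' has_real_derivative f'' y) (at y)" if "y \<in> {-1<..q/3}" for y
    using that unfolding f'_def f''_def by (auto intro!: derivative_eq_intros)
  moreover have convex: "0 \<le> f'' y" if "y \<in> {-1<..q/3}" for y
  proof -
    have "q * (1 - 2*q) \<le> q * ((1 - q) * (1 + y) powr (q - 2))"
      using that one_plus_powr_second_derivative_bound[OF q, of y] q by (intro mult_left_mono) auto
    then show ?thesis unfolding f''_def c_def by (simp add: algebra_simps)
  qed
  have "0 \<le> f x"
    by (rule nonneg_if_second_derivative_nonneg[where I="{-1<..q/3}", OF _ _ _ df df' convex])
      (use x q in \<open>simp_all add: is_interval_oc f_def f'_def\<close>)
  then show ?thesis unfolding f_def c_def by simp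
qed

(* Large enough that K x^4 absorbs the quadratic term for x > q/3, where x^2 > (q/3)^2, and,
   being at least 4, dominates the linear terms for x <= -1. *)
definition quartic_coeff :: "real \<Rightarrow> real" where
  "quartic_coeff q = 9 * (1 - 2*q) / (2*q) + 4"

lemma quartic_coeff_bounds:
  assumes "0 < q" "q \<le> 1/4"
  shows "4 \<le> quartic_coeff q" "9 * (1 - 2*q) / (2*q) \<le> quartic_coeff q"
  using assms by (simp_all add: quartic_coeff_def)

lemma abs_one_plus_powr_le_quartic_left:
  fixes q x :: real
  assumes q: "0 < q" "q \<le> 1/4" and x: "x \<le> -1"
  shows "\<bar>1 + x\<bar> powr q \<le> 1 + q*x - q*(1 - 2*q)/2 * x^2 + quartic_coeff q * x^4"
proof -
  have "\<bar>1 + x\<bar> powr q = (1 + (- x - 2)) powr q"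
    using x by simp
  also have "\<dots> \<le> 1 - 2*q + q * (- x)"
    using x q one_plus_powr_le_one_plus_mult[of q "- x - 2"] by (simp add: algebra_simps)
  also have "\<dots> \<le> 1 + q*x - q*(1 - 2*q)/2 * x^2 + quartic_coeff q * x^4"
  proof -
    have "(- x)^1 \<le> (- x)^4" "(- x)^2 \<le> (- x)^4"
      using x by (intro power_increasing; simp)+
    then have "- x \<le> x^4" "x^2 \<le> x^4"
      by simp_all
    moreover have "q*(1 - 2*q)/2 * x^2 \<le> 1 * x^2"
    proof (rule mult_right_mono)
      have "q * (1 - 2*q) \<le> 1 * 1"
        using q by (intro mult_mono) auto
      then show "q*(1 - 2*q)/2 \<le> 1"
        by simp
    qed simp
    moreover have "4 * x^4 \<le> quartic_coeff q * x^4"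
      using quartic_coeff_bounds[OF q] by (intro mult_right_mono) auto
    moreover have "q * (- x) \<le> 1 * (- x)"
      using x q by (intro mult_right_mono) auto
    ultimately show ?thesis
      using x q by linarith
  qed
  finally show ?thesis .
qed

lemma abs_one_plus_powr_le_quartic_right:
  fixes q x :: real
  assumes q: "0 < q" "q \<le> 1/4" and x: "q/3 < x"
  shows "\<bar>1 + x\<bar> powr q \<le> 1 + q*x - q*(1 - 2*q)/2 * x^2 + quartic_coeff q * x^4"
proof -
  have "q*(1 - 2*q)/2 = 9 * (1 - 2*q) / (2*q) * (q/3)^2"
    using q by (simp add: field_simps power2_eq_square)
  also have "\<dots> \<le> quartic_coeff q * x^2"
    using quartic_coeff_bounds[OF q] x q by (intro mult_mono power_mono) auto
  finally have "q*(1 - 2*q)/2 * x^2 \<le> quartic_coeff q * x^2 * x^2"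
    by (intro mult_right_mono) auto
  moreover have "\<bar>1 + x\<bar> powr q \<le> 1 + q*x"
    using x q one_plus_powr_le_one_plus_mult[of q x] by simp
  ultimately show ?thesis
    by (simp add: power4_eq_xxxx power2_eq_square mult.assoc)
qed

lemma abs_one_plus_powr_le_quartic:
  fixes q x :: real
  assumes q: "0 < q" "q \<le> 1/4"
  shows "\<bar>1 + x\<bar> powr q \<le> 1 + q*x - q*(1 - 2*q)/2 * x^2 + quartic_coeff q * x^4"
proof -
  consider "x \<le> -1" | "-1 < x" "x \<le> q/3" | "q/3 < x" by linarith
  then show ?thesis
  proof cases
    case 2
    then have "\<bar>1 + x\<bar> powr q \<le> 1 + q*x - q*(1 - 2*q)/2 * x^2"
      using one_plus_powr_le_quadratic[OF q] by simp
    moreover have "0 \<le> quartic_coeff q * x^4"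
      using quartic_coeff_bounds(1)[OF q] by simp
    ultimately show ?thesis
      by linarith
  qed (use abs_one_plus_powr_le_quartic_left abs_one_plus_powr_le_quartic_right q in auto)
qed

lemma sum_squares_powr_le:
  fixes x c :: "nat \<Rightarrow> real" and s p :: real
  assumes "\<And>k. k < N \<Longrightarrow> \<bar>x k\<bar> \<le> \<bar>c k\<bar> * s" "0 < s" "0 \<le> p"
  shows "(\<Sum>k<N. \<bar>x k\<bar>\<^sup>2) powr (p / 2) \<le> (\<Sum>k<N. (c k)\<^sup>2) powr (p / 2) * s powr p"
proof -
  have "(\<Sum>k<N. \<bar>x k\<bar>\<^sup>2) \<le> (\<Sum>k<N. (\<bar>c k\<bar> * s)\<^sup>2)"
    using assms(1) by (intro sum_mono power_mono) auto
  also have "\<dots> = (\<Sum>k<N. (c k)\<^sup>2) * s\<^sup>2"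
    by (simp add: sum_distrib_right power_mult_distrib)
  finally have "(\<Sum>k<N. \<bar>x k\<bar>\<^sup>2) powr (p / 2) \<le> ((\<Sum>k<N. (c k)\<^sup>2) * s\<^sup>2) powr (p / 2)"
    using assms(3) by (intro powr_mono2) (auto intro: sum_nonneg)
  also have "\<dots> = (\<Sum>k<N. (c k)\<^sup>2) powr (p / 2) * (s\<^sup>2) powr (p / 2)"
    by (simp add: powr_mult sum_nonneg)
  also have "(s\<^sup>2) powr (p / 2) = s powr p"
    using assms(2) by (simp add: powr_def ln_realpow)
  finally show ?thesis .
qed

section \<open>Gaussian moments\<close>

lemma normal_density_quartic_integral:
  fixes \<sigma> c1 c2 c4 :: real
  assumes "0 < \<sigma>"
  shows "has_bochner_integral lborel
    (\<lambda>w. normal_density 0 \<sigma> w * (1 + c1*w - c2*w^2 + c4*w^4)) (1 - c2*\<sigma>^2 + 3*c4*\<sigma>^4)"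
proof -
  let ?\<phi> = "normal_density 0 \<sigma>"
  have "has_bochner_integral lborel ?\<phi> 1"
    using normal_moment_even[OF assms, where k=0 and \<mu>=0] by simp
  moreover have "has_bochner_integral lborel (\<lambda>w. ?\<phi> w * w) 0"
    using normal_moment_odd[OF assms, where k=0 and \<mu>=0] by simp
  moreover have "has_bochner_integral lborel (\<lambda>w. ?\<phi> w * w^2) (\<sigma>^2)"
    using normal_moment_even[OF assms, where k=1 and \<mu>=0] by simp
  moreover have "has_bochner_integral lborel (\<lambda>w. ?\<phi> w * w^4) (3*\<sigma>^4)"
    using normal_moment_even[OF assms, where k=2 and \<mu>=0]
    by (simp add: fact_numeral power2_eq_square power4_eq_xxxx field_simps)
  ultimately have "has_bochner_integral lborel
      (\<lambda>w. ?\<phi> w + c1 * (?\<phi> w * w) - c2 * (?\<phi> w * w^2) + c4 * (?\<phi> w * w^4))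
      (1 + c1 * 0 - c2 * \<sigma>^2 + c4 * (3*\<sigma>^4))"
    by (intro has_bochner_integral_add has_bochner_integral_diff has_bochner_integral_mult_right)
  then show ?thesis
    by (simp add: algebra_simps)
qed

lemma normal_abs_one_plus_powr_moment:
  fixes X :: "'a \<Rightarrow> real" and \<sigma> \<beta> q :: real
  assumes X: "distributed M lborel X (normal_density 0 \<sigma>)"
    and \<sigma>: "0 < \<sigma>" and q: "0 < q" "q \<le> 1/4"
  shows "integrable M (\<lambda>\<omega>. \<bar>1 + \<beta> * X \<omega>\<bar> powr q)"
    and "(\<integral>\<omega>. \<bar>1 + \<beta> * X \<omega>\<bar> powr q \<partial>M)
           \<le> 1 - q*(1 - 2*q)/2 * \<beta>^2 * \<sigma>^2 + 3 * quartic_coeff q * \<beta>^4 * \<sigma>^4"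
proof -
  define g where "g w = \<bar>1 + \<beta> * w\<bar> powr q" for w :: real
  define P where "P w = 1 + (q*\<beta>)*w - (q*(1 - 2*q)/2 * \<beta>^2)*w^2 + (quartic_coeff q * \<beta>^4)*w^4"
    for w :: real
  let ?\<phi> = "normal_density 0 \<sigma>"
  have g_meas: "g \<in> borel_measurable lborel"
    unfolding g_def by measurable
  have g_le_P: "g w \<le> P w" for w
    using abs_one_plus_powr_le_quartic[OF q, of "\<beta> * w"]
    by (simp add: g_def P_def power_mult_distrib mult_ac)
  have P_int: "has_bochner_integral lborel (\<lambda>w. ?\<phi> w * P w)
      (1 - q*(1 - 2*q)/2 * \<beta>^2 * \<sigma>^2 + 3 * quartic_coeff q * \<beta>^4 * \<sigma>^4)"
    using normal_density_quartic_integral[OF \<sigma>, of "q*\<beta>" "q*(1 - 2*q)/2 * \<beta>^2" "quartic_coeff q * \<beta>^4"]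
    unfolding P_def by (simp add: mult_ac)
  have g_int: "integrable lborel (\<lambda>w. ?\<phi> w * g w)"
  proof (rule Bochner_Integration.integrable_bound)
    show "integrable lborel (\<lambda>w. ?\<phi> w * P w)"
      using P_int by (rule integrable.intros)
    show "AE w in lborel. norm (?\<phi> w * g w) \<le> norm (?\<phi> w * P w)"
    proof (intro AE_I2)
      fix w
      have "g w \<le> \<bar>P w\<bar>"
        using g_le_P[of w] by linarith
      then show "norm (?\<phi> w * g w) \<le> norm (?\<phi> w * P w)"
        by (simp add: g_def abs_mult mult_left_mono)
    qed
  qed (use g_meas in simp)
  show "integrable M (\<lambda>\<omega>. \<bar>1 + \<beta> * X \<omega>\<bar> powr q)"
    using distributed_integrable[OF X g_meas] g_int by (simp add: g_def)
  have "(\<integral>\<omega>. \<bar>1 + \<beta> * X \<omega>\<bar> powr q \<partial>M) = (\<integral>w. ?\<phi> w * g w \<partial>lborel)"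
    using distributed_integral[OF X g_meas] by (simp add: g_def)
  also have "\<dots> \<le> (\<integral>w. ?\<phi> w * P w \<partial>lborel)"
    using g_int P_int g_le_P by (intro integral_mono mult_left_mono) (auto intro: integrable.intros)
  also have "\<dots> = 1 - q*(1 - 2*q)/2 * \<beta>^2 * \<sigma>^2 + 3 * quartic_coeff q * \<beta>^4 * \<sigma>^4"
    using P_int by (rule has_bochner_integral_integral_eq)
  finally show "(\<integral>\<omega>. \<bar>1 + \<beta> * X \<omega>\<bar> powr q \<partial>M)
           \<le> 1 - q*(1 - 2*q)/2 * \<beta>^2 * \<sigma>^2 + 3 * quartic_coeff q * \<beta>^4 * \<sigma>^4" .
qed

section \<open>Choice of the step size\<close>

lemma contraction_gap_has_derivative:
  fixes a \<beta> q K :: real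
  shows "((\<lambda>\<tau>. ((1 + \<tau>*a) * exp (- (a + \<beta>^2/2) * \<tau> / 4)) powr q
            - (1 - q*(1 - 2*q)/2 * \<beta>^2 * \<tau> + K * \<tau>^2))
          has_real_derivative q * (3*(a + \<beta>^2/2)/4 - q*\<beta>^2)) (at 0)"
proof -
  define E where "E \<tau> = (1 + \<tau>*a) * exp (- (a + \<beta>^2/2) * \<tau> / 4)" for \<tau>
  have "(E has_real_derivative a - (a + \<beta>^2/2)/4) (at 0)"
    unfolding E_def by (auto intro!: derivative_eq_intros) (simp add: field_simps)
  from DERIV_fun_powr[OF this, of q]
  have "((\<lambda>\<tau>. E \<tau> powr q) has_real_derivative q * (a - (a + \<beta>^2/2)/4)) (at 0)"
    by (simp add: E_def)
  moreover have "((\<lambda>\<tau>. 1 - q*(1 - 2*q)/2 * \<beta>^2 * \<tau> + K * \<tau>^2)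
      has_real_derivative - q*(1 - 2*q)/2 * \<beta>^2) (at 0)"
    by (auto intro!: derivative_eq_intros)
  ultimately have "((\<lambda>\<tau>. E \<tau> powr q - (1 - q*(1 - 2*q)/2 * \<beta>^2 * \<tau> + K * \<tau>^2))
      has_real_derivative q * (a - (a + \<beta>^2/2)/4) - (- q*(1 - 2*q)/2 * \<beta>^2)) (at 0)"
    by (rule DERIV_diff)
  also have "q * (a - (a + \<beta>^2/2)/4) - (- q*(1 - 2*q)/2 * \<beta>^2) = q * (3*(a + \<beta>^2/2)/4 - q*\<beta>^2)"
    by (simp add: field_simps)
  finally show ?thesis
    unfolding E_def .
qed

lemma exists_step_size_contraction:
  fixes a \<beta> :: real
  assumes ab: "0 < a + \<beta>^2/2"
  obtains q \<tau>0 where "0 < q" "q \<le> 1/4" "0 < \<tau>0"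
    and "\<And>\<tau>. 0 < \<tau> \<Longrightarrow> \<tau> < \<tau>0 \<Longrightarrow> 0 < 1 + \<tau>*a"
    and "\<And>\<tau>. 0 < \<tau> \<Longrightarrow> \<tau> < \<tau>0 \<Longrightarrow>
           1 - q*(1 - 2*q)/2 * \<beta>^2 * \<tau> + 3 * quartic_coeff q * \<beta>^4 * \<tau>^2
             < ((1 + \<tau>*a) * exp (- (a + \<beta>^2/2) * \<tau> / 4)) powr q"
proof -
  define b where "b = \<beta>^2/2"
  define q where "q = min (1/4) ((a + b) / (4*(b + 1)))"
  have b: "0 \<le> b" "0 < a + b"
    using ab by (simp_all add: b_def)
  have q: "0 < q" "q \<le> 1/4"
    using b by (auto simp: q_def min_def)
  have "q \<le> (a + b) / (4*(b + 1))"
    unfolding q_def by (rule min.cobounded2)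
  then have "q * (4*(b + 1)) \<le> a + b"
    using b by (simp add: le_divide_eq)
  then have "0 < 3*(a + b)/4 - 2*q*b"
    using q b by (simp add: algebra_simps)
  then have "0 < q * (3*(a + \<beta>^2/2)/4 - q*\<beta>^2)"
    using q(1) by (intro mult_pos_pos) (simp_all add: b_def)
  with contraction_gap_has_derivative[of a \<beta> q "3 * quartic_coeff q * \<beta>^4"]
  obtain d where d: "0 < d" "\<And>\<tau>. 0 < \<tau> \<Longrightarrow> \<tau> < d \<Longrightarrow>
      1 - q*(1 - 2*q)/2 * \<beta>^2 * \<tau> + 3 * quartic_coeff q * \<beta>^4 * \<tau>^2
        < ((1 + \<tau>*a) * exp (- (a + \<beta>^2/2) * \<tau> / 4)) powr q"
    by (auto dest!: DERIV_pos_inc_right)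
  show ?thesis
  proof (rule that[OF q, of "min d (1 / (\<bar>a\<bar> + 1))"])
    show "0 < 1 + \<tau>*a" if "0 < \<tau>" "\<tau> < min d (1 / (\<bar>a\<bar> + 1))" for \<tau>
    proof -
      have "\<tau> * (- a) \<le> \<tau> * \<bar>a\<bar>"
        using that by (intro mult_left_mono) auto
      moreover have "\<tau> * (\<bar>a\<bar> + 1) < 1"
        using that by (simp add: less_divide_eq)
      ultimately show ?thesis
        using that by (simp add: distrib_left)
    qed
  qed (use d in auto)
qed

section \<open>Products of independent factors\<close>

lemma sigma_sets_vimage_subset:
  assumes "f \<in> measurable A N"
  shows "sigma_sets (space A) {f -` B \<inter> space A | B. B \<in> sets N} \<subseteq> sets A"
  using assms by (intro sets.sigma_sets_subset) (auto simp: measurable_sets)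

lemma (in prob_space) indep_set_mono:
  assumes "indep_set A B" "A' \<subseteq> A" "B' \<subseteq> B"
  shows "indep_set A' B'"
proof -
  have "A \<subseteq> events" "B \<subseteq> events" "\<forall>a\<in>A. \<forall>b\<in>B. prob (a \<inter> b) = prob a * prob b"
    using assms(1) by (simp_all add: indep_sets2_eq)
  then show ?thesis
    using assms(2,3) unfolding indep_sets2_eq by (meson subsetD order_trans)
qed

lemma (in prob_space) indep_var_if_indep_set_generated:
  fixes X Y :: "'a \<Rightarrow> real"
  assumes G: "subalgebra M G" and X: "X \<in> borel_measurable G" and Y: "Y \<in> borel_measurable M"
    and indep: "indep_set (sets G) (sigma_sets (space M) {Y -` A \<inter> space M | A. A \<in> sets borel})"
  shows "indep_var borel X borel Y"
  unfolding indep_var_eq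
proof (intro conjI)
  show "random_variable borel X"
    using measurable_from_subalg[OF G X] by simp
  show "random_variable borel Y"
    using Y by simp
  have "space G = space M"
    using G by (simp add: subalgebra_def)
  then show "indep_set (sigma_sets (space M) {X -` A \<inter> space M | A. A \<in> sets borel})
      (sigma_sets (space M) {Y -` A \<inter> space M | A. A \<in> sets borel})"
    using sigma_sets_vimage_subset[OF X] by (intro indep_set_mono[OF indep]) auto
qed

lemma (in prob_space) integral_prod_indep_adapted_le:
  fixes Z :: "nat \<Rightarrow> 'a \<Rightarrow> real"
  assumes G: "\<And>n. subalgebra M (G n)" "\<And>n. sets (G n) \<subseteq> sets (G (Suc n))"
    and adapted: "\<And>n. Z n \<in> borel_measurable (G (Suc n))"
    and indep: "\<And>n. indep_set (sets (G n))
                  (sigma_sets (space M) {Z n -` A \<inter> space M | A. A \<in> sets borel})"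
    and Z: "\<And>n. integrable M (Z n)" "\<And>n \<omega>. 0 \<le> Z n \<omega>" "\<And>n. expectation (Z n) \<le> m"
  shows "integrable M (\<lambda>\<omega>. \<Prod>j<n. Z j \<omega>) \<and> expectation (\<lambda>\<omega>. \<Prod>j<n. Z j \<omega>) \<le> m ^ n"
proof -
  have "(\<lambda>\<omega>. \<Prod>j<n. Z j \<omega>) \<in> borel_measurable (G n)
    \<and> integrable M (\<lambda>\<omega>. \<Prod>j<n. Z j \<omega>) \<and> expectation (\<lambda>\<omega>. \<Prod>j<n. Z j \<omega>) \<le> m ^ n"
  proof (induction n)
    case 0
    then show ?case by (simp add: prob_space)
  next
    case (Suc n)
    let ?P = "\<lambda>\<omega>. \<Prod>j<n. Z j \<omega>"
    have P_meas: "?P \<in> borel_measurable (G n)"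
      using Suc.IH by blast
    have "subalgebra (G (Suc n)) (G n)"
      using G by (auto simp: subalgebra_def)
    then have "(\<lambda>\<omega>. ?P \<omega> * Z n \<omega>) \<in> borel_measurable (G (Suc n))"
      using measurable_from_subalg[OF _ P_meas] adapted by measurable
    moreover have iv: "indep_var borel ?P borel (Z n)"
      using G(1) P_meas measurable_from_subalg[OF G(1) adapted] indep
      by (rule indep_var_if_indep_set_generated)
    then have "integrable M (\<lambda>\<omega>. ?P \<omega> * Z n \<omega>)"
      using Suc.IH Z by (intro indep_var_integrable) auto
    moreover have "expectation (\<lambda>\<omega>. ?P \<omega> * Z n \<omega>) = expectation ?P * expectation (Z n)"
      using iv Suc.IH Z by (intro indep_var_lebesgue_integral) auto
    moreover have "expectation ?P * expectation (Z n) \<le> m ^ n * m"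
    proof (rule mult_mono')
      show "0 \<le> expectation ?P" "0 \<le> expectation (Z n)"
        using Z(2) by (auto intro!: integral_nonneg_AE prod_nonneg)
    qed (use Suc.IH Z(3) in auto)
    ultimately show ?case
      by (simp add: mult.commute)
  qed
  then show ?thesis by blast
qed

lemma (in prob_space) AE_eventually_less_geometric:
  fixes P :: "nat \<Rightarrow> 'a \<Rightarrow> real"
  assumes P: "\<And>n. integrable M (P n)" "\<And>n \<omega>. 0 \<le> P n \<omega>"
    and mean: "\<And>n. expectation (P n) \<le> m ^ n"
    and m: "0 \<le> m" "m < r"
  shows "AE \<omega> in M. eventually (\<lambda>n. P n \<omega> < r ^ n) sequentially"
proof -
  define A where "A n = {\<omega> \<in> space M. r ^ n \<le> P n \<omega>}" for n
  have P_meas[measurable]: "P n \<in> borel_measurable M" for n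
    using P(1) by (rule borel_measurable_integrable)
  have A_sets: "A n \<in> sets M" for n
    unfolding A_def by measurable
  have "prob (A n) \<le> (m / r) ^ n" for n
  proof -
    have "prob (A n) \<le> expectation (P n) / r ^ n"
      unfolding A_def using P m
      by (intro integral_Markov_inequality_measure[where A="space M"]) auto
    also have "\<dots> \<le> (m / r) ^ n"
      using mean[of n] m by (simp add: power_divide divide_right_mono)
    finally show ?thesis .
  qed
  then have "summable (\<lambda>n. prob (A n))"
    using m by (intro summable_comparison_test'[OF summable_geometric[of "m / r"]]) auto
  then have "AE \<omega> in M. eventually (\<lambda>n. \<omega> \<in> space M - A n) sequentially"
    using A_sets by (intro borel_cantelli_AE1) (auto simp: emeasure_eq_measure)
  then show ?thesis
    by (rule AE_mp) (auto simp: A_def not_le elim: eventually_mono intro!: AE_I2)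
qed

lemma eventually_le_geometric_imp_bounded:
  fixes x :: "nat \<Rightarrow> real"
  assumes "eventually (\<lambda>n. x n \<le> \<rho> ^ n) sequentially" "\<And>n. 0 \<le> x n" "0 < \<rho>"
  obtains C where "\<And>n. x n \<le> C * \<rho> ^ n"
proof -
  have "Bseq (\<lambda>n. x n / \<rho> ^ n)"
    using assms by (intro BfunI[where K=1]) (auto elim!: eventually_mono simp: divide_le_eq)
  then obtain K where "0 < K" "\<forall>n. norm (x n / \<rho> ^ n) \<le> K"
    by (rule BseqE)
  then have "x n \<le> K * \<rho> ^ n" for n
    using assms(2,3) by (simp add: divide_le_eq abs_of_nonneg)
  then show ?thesis by (rule that)
qed

lemma AE_bounded_imp_measurable_bound:
  fixes f :: "nat \<Rightarrow> 'a \<Rightarrow> real" and h :: "nat \<Rightarrow> real"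
  assumes f: "\<And>n. f n \<in> borel_measurable M" and h: "\<And>n. 0 < h n"
    and bounded: "AE \<omega> in M. \<exists>B. \<forall>n. f n \<omega> \<le> B * h n"
  shows "\<exists>\<xi>. \<xi> \<in> borel_measurable M \<and> (AE \<omega> in M. \<forall>n. f n \<omega> \<le> \<xi> \<omega> * h n)"
proof (intro exI conjI)
  \<comment> \<open>on the null set where the supremum is infinite, \<open>enn2real\<close> returns 0\<close>
  define \<xi> where "\<xi> \<omega> = enn2real (SUP n. ennreal (f n \<omega> / h n))" for \<omega>
  show "\<xi> \<in> borel_measurable M"
    unfolding \<xi>_def using f by measurable
  show "AE \<omega> in M. \<forall>n. f n \<omega> \<le> \<xi> \<omega> * h n"
    using bounded
  proof eventually_elim
    case (elim \<omega>)
    then obtain B where B: "\<And>n. f n \<omega> / h n \<le> B"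
      using h by (auto simp: divide_le_eq)
    then have finite: "(SUP n. ennreal (f n \<omega> / h n)) < top"
      by (intro le_less_trans[OF SUP_least[OF ennreal_leI[OF B]]]) auto
    show ?case
    proof
      fix n
      have "f n \<omega> / h n \<le> enn2real (ennreal (f n \<omega> / h n))"
        by (cases "0 \<le> f n \<omega> / h n") (simp_all add: ennreal_neg)
      also have "\<dots> \<le> \<xi> \<omega>"
        unfolding \<xi>_def by (intro enn2real_mono[OF SUP_upper finite]) auto
      finally show "f n \<omega> \<le> \<xi> \<omega> * h n"
        using h[of n] by (simp add: divide_le_eq)
    qed
  qed
qed

lemma
  assumes "is_brownian_motion M F W"
  shows brownian_motion_subalgebra: "subalgebra M (F t)"
    and brownian_motion_sets_mono: "s \<le> t \<Longrightarrow> sets (F s) \<subseteq> sets (F t)"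
    and brownian_motion_adapted: "0 \<le> s \<Longrightarrow> s \<le> t \<Longrightarrow> W s \<in> borel_measurable (F t)"
    and brownian_motion_measurable: "0 \<le> s \<Longrightarrow> W s \<in> borel_measurable M"
    and brownian_motion_indep_increment: "0 \<le> s \<Longrightarrow> s < t \<Longrightarrow>
          prob_space.indep_set M (sets (F s))
            (sets (vimage_algebra (space M) (\<lambda>\<omega>. W t \<omega> - W s \<omega>) borel))"
    and brownian_motion_normal_increment: "0 \<le> s \<Longrightarrow> s < t \<Longrightarrow>
          distributed M lborel (\<lambda>\<omega>. W t \<omega> - W s \<omega>) (normal_density 0 (sqrt (t - s)))"
proof -
  show sub: "subalgebra M (F t)" for t
    using assms by (simp add: is_brownian_motion_def is_filtration_def)
  show mono: "sets (F s) \<subseteq> sets (F t)" if "s \<le> t" for s t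
    using assms that by (simp add: is_brownian_motion_def is_filtration_def)
  have adapted: "W s \<in> borel_measurable (F s)" if "0 \<le> s" for s
    using assms that by (simp add: is_brownian_motion_def)
  show "W s \<in> borel_measurable (F t)" if "0 \<le> s" "s \<le> t"
  proof (rule measurable_from_subalg[OF _ adapted[OF that(1)]])
    show "subalgebra (F t) (F s)"
      using sub[of s] sub[of t] mono[OF that(2)] by (simp add: subalgebra_def)
  qed
  show "W s \<in> borel_measurable M" if "0 \<le> s"
    using measurable_from_subalg[OF sub adapted[OF that]] .
qed (use assms in \<open>simp_all add: is_brownian_motion_def\<close>)

definition grid_increment :: "(real \<Rightarrow> 'a \<Rightarrow> real) \<Rightarrow> real \<Rightarrow> nat \<Rightarrow> 'a \<Rightarrow> real" where
  "grid_increment W \<tau> j \<omega> = W (real (Suc j) * \<tau>) \<omega> - W (real j * \<tau>) \<omega>"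

lemma
  assumes BM: "is_brownian_motion M F W" and \<tau>: "0 < \<tau>"
  shows grid_increment_adapted: "grid_increment W \<tau> j \<in> borel_measurable (F (real (Suc j) * \<tau>))"
    and grid_increment_indep: "prob_space.indep_set M (sets (F (real j * \<tau>)))
          (sets (vimage_algebra (space M) (grid_increment W \<tau> j) borel))"
    and grid_increment_normal:
          "distributed M lborel (grid_increment W \<tau> j) (normal_density 0 (sqrt \<tau>))"
proof -
  have grid: "0 \<le> real j * \<tau>" "real j * \<tau> < real (Suc j) * \<tau>"
    using \<tau> by simp_all
  have incr: "grid_increment W \<tau> j = (\<lambda>\<omega>. W (real (Suc j) * \<tau>) \<omega> - W (real j * \<tau>) \<omega>)"
    by (simp add: grid_increment_def fun_eq_iff)
  show "grid_increment W \<tau> j \<in> borel_measurable (F (real (Suc j) * \<tau>))"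
    unfolding incr using grid
    by (intro borel_measurable_diff brownian_motion_adapted[OF BM]) auto
  show "prob_space.indep_set M (sets (F (real j * \<tau>)))
          (sets (vimage_algebra (space M) (grid_increment W \<tau> j) borel))"
    unfolding incr using brownian_motion_indep_increment[OF BM grid] .
  show "distributed M lborel (grid_increment W \<tau> j) (normal_density 0 (sqrt \<tau>))"
    unfolding incr using brownian_motion_normal_increment[OF BM grid] by (simp add: algebra_simps)
qed

lemma brownian_prod_powr_moment_le:
  fixes \<beta> \<tau> q :: real
  assumes M: "prob_space M" and BM: "is_brownian_motion M F W"
    and \<tau>: "0 < \<tau>" and q: "0 < q" "q \<le> 1/4"
  shows "integrable M (\<lambda>\<omega>. (\<Prod>j<n. \<bar>1 + \<beta> * grid_increment W \<tau> j \<omega>\<bar>) powr q)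
    \<and> (\<integral>\<omega>. (\<Prod>j<n. \<bar>1 + \<beta> * grid_increment W \<tau> j \<omega>\<bar>) powr q \<partial>M)
        \<le> (1 - q*(1 - 2*q)/2 * \<beta>^2 * \<tau> + 3 * quartic_coeff q * \<beta>^4 * \<tau>^2) ^ n"
proof -
  interpret prob_space M by (rule M)
  define Z where "Z j = (\<lambda>\<omega>. \<bar>1 + \<beta> * grid_increment W \<tau> j \<omega>\<bar> powr q)" for j
  have sqrt_\<tau>: "sqrt \<tau> ^ 2 = \<tau>" "sqrt \<tau> ^ 4 = \<tau>^2"
    using \<tau> by (simp_all add: power4_eq_xxxx power2_eq_square)
  have Z_int: "integrable M (Z j)"
    and Z_mean: "expectation (Z j) \<le> 1 - q*(1 - 2*q)/2 * \<beta>^2 * \<tau> + 3 * quartic_coeff q * \<beta>^4 * \<tau>^2" for j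
    using normal_abs_one_plus_powr_moment[OF grid_increment_normal[OF BM \<tau>] _ q, of \<beta>] \<tau>
    by (simp_all add: Z_def sqrt_\<tau>)
  have Z_adapted: "Z j \<in> borel_measurable (F (real (Suc j) * \<tau>))" for j
    using grid_increment_adapted[OF BM \<tau>] unfolding Z_def by measurable
  have Z_indep: "indep_set (sets (F (real j * \<tau>)))
      (sigma_sets (space M) {Z j -` A \<inter> space M | A. A \<in> sets borel})" for j
  proof (rule indep_set_mono[OF grid_increment_indep[OF BM \<tau>] order_refl])
    have "grid_increment W \<tau> j \<in> borel_measurable (vimage_algebra (space M) (grid_increment W \<tau> j) borel)"
      by (rule measurable_vimage_algebra1) simp
    then have "Z j \<in> borel_measurable (vimage_algebra (space M) (grid_increment W \<tau> j) borel)"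
      unfolding Z_def by measurable
    from sigma_sets_vimage_subset[OF this]
    show "sigma_sets (space M) {Z j -` A \<inter> space M | A. A \<in> sets borel}
        \<subseteq> sets (vimage_algebra (space M) (grid_increment W \<tau> j) borel)" by simp
  qed
  have "integrable M (\<lambda>\<omega>. \<Prod>j<n. Z j \<omega>) \<and> expectation (\<lambda>\<omega>. \<Prod>j<n. Z j \<omega>)
      \<le> (1 - q*(1 - 2*q)/2 * \<beta>^2 * \<tau> + 3 * quartic_coeff q * \<beta>^4 * \<tau>^2) ^ n"
  proof (rule integral_prod_indep_adapted_le[where G="\<lambda>n. F (real n * \<tau>)"])
    show "subalgebra M (F (real n * \<tau>))" for n
      by (rule brownian_motion_subalgebra[OF BM])
    show "sets (F (real n * \<tau>)) \<subseteq> sets (F (real (Suc n) * \<tau>))" for n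
      using \<tau> by (intro brownian_motion_sets_mono[OF BM]) simp
    show "0 \<le> Z n \<omega>" for n \<omega>
      by (simp add: Z_def)
  qed (rule Z_adapted Z_indep Z_int Z_mean)+
  then show ?thesis
    by (simp add: Z_def prod_powr_distrib)
qed

lemma brownian_AE_prod_le_geometric:
  fixes \<beta> \<tau> q \<rho> :: real
  assumes M: "prob_space M" and BM: "is_brownian_motion M F W"
    and \<tau>: "0 < \<tau>" and q: "0 < q" "q \<le> 1/4" and \<rho>: "0 < \<rho>"
    and moment: "1 - q*(1 - 2*q)/2 * \<beta>^2 * \<tau> + 3 * quartic_coeff q * \<beta>^4 * \<tau>^2 < \<rho> powr q"
  shows "AE \<omega> in M. \<exists>C. \<forall>n. (\<Prod>j<n. \<bar>1 + \<beta> * grid_increment W \<tau> j \<omega>\<bar>) \<le> C * \<rho> ^ n"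
proof -
  interpret prob_space M by (rule M)
  let ?m = "1 - q*(1 - 2*q)/2 * \<beta>^2 * \<tau> + 3 * quartic_coeff q * \<beta>^4 * \<tau>^2"
  let ?P = "\<lambda>n \<omega>. \<Prod>j<n. \<bar>1 + \<beta> * grid_increment W \<tau> j \<omega>\<bar>"
  note moments = brownian_prod_powr_moment_le[OF M BM \<tau> q, where \<beta>=\<beta>]
  have "0 \<le> expectation (\<lambda>\<omega>. ?P 1 \<omega> powr q)"
    by (intro integral_nonneg_AE AE_I2) simp
  then have "0 \<le> ?m ^ 1"
    using moments[of 1] by (blast intro: order_trans)
  then have "0 \<le> ?m"
    by simp
  then have "AE \<omega> in M. eventually (\<lambda>n. ?P n \<omega> powr q < (\<rho> powr q) ^ n) sequentially"
    using moments moment by (intro AE_eventually_less_geometric) auto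
  moreover have "(\<rho> powr q) ^ n = (\<rho> ^ n) powr q" for n
    using \<rho> by (simp add: powr_power powr_powr mult.commute flip: powr_realpow)
  ultimately have "AE \<omega> in M. eventually (\<lambda>n. ?P n \<omega> powr q < (\<rho> ^ n) powr q) sequentially"
    by simp
  moreover have "?P n \<omega> \<le> \<rho> ^ n" if less: "?P n \<omega> powr q < (\<rho> ^ n) powr q" for n \<omega>
  proof (rule ccontr)
    assume "\<not> ?P n \<omega> \<le> \<rho> ^ n"
    then have "(\<rho> ^ n) powr q \<le> ?P n \<omega> powr q"
      using q \<rho> by (intro powr_mono2) auto
    with less show False by simp
  qed
  ultimately have "AE \<omega> in M. eventually (\<lambda>n. ?P n \<omega> \<le> \<rho> ^ n) sequentially"
    by (elim AE_mp) (auto intro!: AE_I2 elim: eventually_mono)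
  then show ?thesis
  proof eventually_elim
    case (elim \<omega>)
    then obtain C where "\<And>n. ?P n \<omega> \<le> C * \<rho> ^ n"
      by (rule eventually_le_geometric_imp_bounded) (use \<rho> in \<open>auto simp: prod_nonneg\<close>)
    then show ?case by blast
  qed
qed

section \<open>Almost sure decay of the scheme\<close>

lemma em_scheme_eq_prod:
  "em_scheme lam \<beta>0 \<beta>1 \<tau> W Y0 n \<omega> k
     = Y0 \<omega> k * (\<Prod>j<n. 1 + \<beta>1 * grid_increment W \<tau> j \<omega>) / (1 + \<tau> * (lam k - \<beta>0)) ^ n"
  by (induction n) (simp_all add: grid_increment_def mult_ac)

lemma measurable_em_scheme:
  assumes "\<And>n. W (real n * \<tau>) \<in> borel_measurable M" "\<And>k. (\<lambda>\<omega>. Y0 \<omega> k) \<in> borel_measurable M"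
  shows "(\<lambda>\<omega>. em_scheme lam \<beta>0 \<beta>1 \<tau> W Y0 n \<omega> k) \<in> borel_measurable M"
proof (induction n)
  case (Suc n)
  note [measurable] = Suc.IH assms(1)[of n] assms(1)[of "Suc n"]
  show ?case by (simp only: em_scheme.simps) measurable
qed (simp add: assms)

lemma em_scheme_abs_le:
  fixes d e C :: real
  assumes d: "0 < d" "\<And>k. d \<le> 1 + \<tau> * (lam k - \<beta>0)" and e: "0 < e"
    and growth: "\<And>n. (\<Prod>j<n. \<bar>1 + \<beta>1 * grid_increment W \<tau> j \<omega>\<bar>) \<le> C * (d * e) ^ n"
  shows "\<bar>em_scheme lam \<beta>0 \<beta>1 \<tau> W Y0 n \<omega> k\<bar> \<le> \<bar>Y0 \<omega> k * C\<bar> * e ^ n"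
proof -
  have "0 \<le> C * (d * e) ^ n"
    using growth[of n] by (meson order_trans prod_nonneg abs_ge_zero)
  moreover have "0 < (d * e) ^ n"
    using d e by simp
  ultimately have C: "0 \<le> C"
    by (meson not_le zero_le_mult_iff)
  have dk: "0 < 1 + \<tau> * (lam k - \<beta>0)"
    using d(1) d(2)[of k] by linarith
  have "\<bar>em_scheme lam \<beta>0 \<beta>1 \<tau> W Y0 n \<omega> k\<bar>
      = \<bar>Y0 \<omega> k\<bar> * (\<Prod>j<n. \<bar>1 + \<beta>1 * grid_increment W \<tau> j \<omega>\<bar>) / (1 + \<tau> * (lam k - \<beta>0)) ^ n"
    using dk by (simp add: em_scheme_eq_prod abs_mult abs_prod)
  also have "\<dots> \<le> \<bar>Y0 \<omega> k\<bar> * (C * (d * e) ^ n) / d ^ n"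
    using growth C d e dk by (intro frac_le mult_left_mono mult_nonneg_nonneg power_mono) auto
  also have "\<dots> = \<bar>Y0 \<omega> k * C\<bar> * e ^ n"
    using d C by (simp add: abs_mult power_mult_distrib)
  finally show ?thesis .
qed

lemma em_scheme_AE_decay:
  fixes \<tau> q d e p :: real
  assumes M: "prob_space M" and BM: "is_brownian_motion M F W" and \<tau>: "0 < \<tau>"
    and q: "0 < q" "q \<le> 1/4" and d: "0 < d" "\<And>k. d \<le> 1 + \<tau> * (lam k - \<beta>0)"
    and e: "0 < e" and p: "0 \<le> p"
    and contraction: "1 - q*(1 - 2*q)/2 * \<beta>1^2 * \<tau> + 3 * quartic_coeff q * \<beta>1^4 * \<tau>^2 < (d * e) powr q"
  shows "AE \<omega> in M. \<exists>B. \<forall>n.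
           (\<Sum>k<N. \<bar>em_scheme lam \<beta>0 \<beta>1 \<tau> W Y0 n \<omega> k\<bar>\<^sup>2) powr (p / 2) \<le> B * (e ^ n) powr p"
  using brownian_AE_prod_le_geometric[OF M BM \<tau> q mult_pos_pos[OF d(1) e] contraction]
proof eventually_elim
  case (elim \<omega>)
  then obtain C where "\<And>n. (\<Prod>j<n. \<bar>1 + \<beta>1 * grid_increment W \<tau> j \<omega>\<bar>) \<le> C * (d * e) ^ n"
    by blast
  then have "\<bar>em_scheme lam \<beta>0 \<beta>1 \<tau> W Y0 n \<omega> k\<bar> \<le> \<bar>Y0 \<omega> k * C\<bar> * e ^ n" for n k
    by (rule em_scheme_abs_le[OF d e])
  then have "\<forall>n. (\<Sum>k<N. \<bar>em_scheme lam \<beta>0 \<beta>1 \<tau> W Y0 n \<omega> k\<bar>\<^sup>2) powr (p / 2)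
      \<le> (\<Sum>k<N. (Y0 \<omega> k * C)\<^sup>2) powr (p / 2) * (e ^ n) powr p"
    using e p by (intro allI sum_squares_powr_le) simp_all
  then show ?case by blast
qed

theorem proposition8:
  fixes M :: "'a measure" and F :: "real \<Rightarrow> 'a measure" and W :: "real \<Rightarrow> 'a \<Rightarrow> real"
    and D :: "'h::{real_inner,complete_space} set" and A :: "'h \<Rightarrow> 'h"
    and lam :: "nat \<Rightarrow> real" and \<phi> :: "nat \<Rightarrow> 'h"
    and \<beta>0 \<beta>1 p :: real and N :: nat and y0 :: "'a \<Rightarrow> 'h"
  assumes M: "prob_space M"
    and BM: "is_brownian_motion M F W"
    and A: "self_adjoint_op D A"
    and A_pos: "\<forall>x\<in>D. x \<noteq> 0 \<longrightarrow> inner (A x) x > 0"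
    and eig_dom: "\<forall>k. \<phi> k \<in> D"
    and eig: "\<forall>k. A (\<phi> k) = lam k *\<^sub>R \<phi> k"
    and lam_pos: "lam 0 > 0"
    and lam_mono: "mono lam"
    and lam_inf: "filterlim lam at_top sequentially"
    and orthonormal: "\<forall>i j. inner (\<phi> i) (\<phi> j) = (if i = j then 1 else 0)"
    and basis: "closure (span (range \<phi>)) = UNIV"
    and y0_meas: "y0 \<in> borel_measurable (F 0)"
    and y0_moment: "integrable M (\<lambda>\<omega>. norm (y0 \<omega>) powr p)"
    and p: "p \<ge> 1" and N: "N \<ge> 1"
    and cond: "\<beta>1\<^sup>2 > 2 * (\<beta>0 - lam 0)"
  shows "\<exists>\<tau>0>0. \<forall>\<tau>. 0 < \<tau> \<and> \<tau> < \<tau>0 \<longrightarrow>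
           (\<exists>\<xi>. \<xi> \<in> borel_measurable M \<and>
              (AE \<omega> in M. \<forall>n::nat.
                 (\<Sum>k<N. \<bar>em_scheme lam \<beta>0 \<beta>1 \<tau> W (\<lambda>\<omega> k. inner (y0 \<omega>) (\<phi> k)) n \<omega> k\<bar>\<^sup>2)
                   powr (p / 2)
                 \<le> \<xi> \<omega> * exp (- ((p / 2 * \<beta>1\<^sup>2 + p * (lam 0 - \<beta>0)) / 4) * (real n * \<tau>))))"
proof -
  define a where "a = lam 0 - \<beta>0"
  define e where "e \<tau> = exp (- (a + \<beta>1^2/2) * \<tau> / 4)" for \<tau>
  obtain q \<tau>0 where q: "0 < q" "q \<le> 1/4" and \<tau>0: "0 < \<tau>0"
    and stable: "\<And>\<tau>. 0 < \<tau> \<Longrightarrow> \<tau> < \<tau>0 \<Longrightarrow> 0 < 1 + \<tau>*a"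
    and contraction: "\<And>\<tau>. 0 < \<tau> \<Longrightarrow> \<tau> < \<tau>0 \<Longrightarrow>
          1 - q*(1 - 2*q)/2 * \<beta>1^2 * \<tau> + 3 * quartic_coeff q * \<beta>1^4 * \<tau>^2 < ((1 + \<tau>*a) * e \<tau>) powr q"
    using exists_step_size_contraction[of a \<beta>1] cond unfolding a_def e_def by auto
  have Y0_M: "(\<lambda>\<omega>. inner (y0 \<omega>) (\<phi> k)) \<in> borel_measurable M" for k
    using measurable_from_subalg[OF brownian_motion_subalgebra[OF BM] y0_meas]
    by (rule borel_measurable_continuous_on[rotated]) (intro continuous_intros)
  show ?thesis
  proof (intro exI[of _ \<tau>0] conjI allI impI \<tau>0)
    fix \<tau> :: real
    assume \<tau>: "0 < \<tau> \<and> \<tau> < \<tau>0"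
    let ?Y = "em_scheme lam \<beta>0 \<beta>1 \<tau> W (\<lambda>\<omega> k. inner (y0 \<omega>) (\<phi> k))"
    have "1 + \<tau>*a \<le> 1 + \<tau> * (lam k - \<beta>0)" for k
      using lam_mono \<tau> by (simp add: a_def monoD)
    then have "AE \<omega> in M. \<exists>B. \<forall>n. (\<Sum>k<N. \<bar>?Y n \<omega> k\<bar>\<^sup>2) powr (p / 2) \<le> B * (e \<tau> ^ n) powr p"
      using \<tau> stable contraction p by (intro em_scheme_AE_decay[OF M BM _ q, where d="1 + \<tau>*a"]) (auto simp: e_def)
    moreover have "(e \<tau> ^ n) powr p = exp (- ((p / 2 * \<beta>1\<^sup>2 + p * (lam 0 - \<beta>0)) / 4) * (real n * \<tau>))" for n
      by (simp add: e_def powr_def exp_of_nat_mult[symmetric] a_def field_simps)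
    moreover have [measurable]: "(\<lambda>\<omega>. ?Y n \<omega> k) \<in> borel_measurable M" for n k
      using \<tau> Y0_M by (intro measurable_em_scheme brownian_motion_measurable[OF BM]) auto
    ultimately show "\<exists>\<xi>. \<xi> \<in> borel_measurable M \<and> (AE \<omega> in M. \<forall>n. (\<Sum>k<N. \<bar>?Y n \<omega> k\<bar>\<^sup>2) powr (p / 2)
        \<le> \<xi> \<omega> * exp (- ((p / 2 * \<beta>1\<^sup>2 + p * (lam 0 - \<beta>0)) / 4) * (real n * \<tau>)))"
      by (intro AE_bounded_imp_measurable_bound) auto
  qed
qed

end
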